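(* Let $C$ be a connected $2$-dimensional unoriented resolution configuration, and let $F_C: V_0(C)\to V_1(C)$ be a non-zero associated map of bidegree $(2,4)$ such that the assignment $C\mapsto F_C$ satisfies the naturality rule, the disoriented rule, the filtration rule and the duality rule. Then $C$ is a tree or a dual tree (i.e. $F_C$ would have to be zero otherwise), and: if $C$ is a tree with starting circles $x_1,x_2,x_3$ and ending circle $y$, then $F_C(x_1x_2x_3)=y$ and $F_C$ vanishes on all other monomials; if $C$ is a dual tree with starting circle $x$ and ending circles $y_1,y_2,y_3$, then $F_C(1)=1\otimes1\otimes1$ and $F_C(x)=0$.
   Context: A $k$-dimensional resolution configuration $C$ is a finite set of pairwise disjoint embedded circles $x_1,\dots,x_t$ in $S^2$ together with $k$ embedded arcs $\gamma_1,\dots,\gamma_k$ which are pairwise disjoint, whose endpoints lie on the circles and whose interiors are disjoint from the circles. It is oriented if the arcs are oriented, and unoriented otherwise. The circles $x_i$ are the starting circles; the ending circles $y_1,\dots,y_s$ are obtained from the starting circles by performing surgery along all arcs. The dual configuration $C^*$ consists of the ending circles together with the dual arcs $\gamma_i^*$ obtained by rotating $\gamma_i$ by $90$ degrees counterclockwise (so the starting circles of $C^*$ are the ending circles of $C$ and vice versa). Writing $S^2=\mathbb{R}^2\cup\{\infty\}$, the mirror $m(C)$ is the reflection of $C$ in $\mathbb{R}\times\{0\}$. $C$ is connected if the graph whose vertices are the circles and whose edges are the arcs is connected. A connected $k$-dimensional configuration is a tree if it has exactly $k+1$ starting circles and one ending circle; a dual tree is the dual of a tree (one starting circle, $k+1$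 ending circles). Set $V_0(C)=\bigotimes_{i=1}^t\mathbb{F}_2[x_i]/(x_i^2)$ and $V_1(C)=\bigotimes_{j=1}^s\mathbb{F}_2[y_j]/(y_j^2)$, with basis of monomials (products of circle variables). Quantum grading: in each factor $\mathrm{gr}_q(1)=1$, $\mathrm{gr}_q(x)=-1$, added over tensor factors; for a $k$-dimensional configuration the quantum grading of monomials of $V_1(C)$ is additionally shifted up by $k$. A linear map $F_C:V_0(C)\to V_1(C)$ for a $k$-dimensional $C$ has bidegree $(k,p)$ if it sends each monomial to a linear combination of monomials whose quantum grading exceeds that of the source by $p$. Rules for an assignment $C\mapsto F_C$: (Naturality) if an orientation-preserving diffeomorphism of $S^2$ sends $C$ to $C'$, then $F_C=F_{C'}$ under the induced identifications $V_0(C)=V_0(C')$, $V_1(C)=V_1(C')$. (Disoriented) if $C,C'$ differ only in the orientations of arcs, $F_C=F_{C'}$. (Duality) using the canonical identifications $V_0(m(C^* ))=V_1(C)$ and $V_1(m(C^* ))=V_0(C)$ and the involution $a\mapsto a^*$ on monomials induced by $1^*=z$, $z^*=1$ in each factor $\mathbb{F}_2[z]/(z^2)$, for all monomials $a\in V_0(C)$, $b\in V_1(C)$ the coefficient of $b$ in $F_C(a)$ equals the coefficient of $a^*$ in $F_{m(C^* )}(b^* )$. (Filtration) for a point $P$ on the starting circles, let $x(P)$, $y(P)$ be the starting and ending circles containing $P$; if a monomial $a$ is divisible by $x(P)$ and the coefficient of a monomial $b$ in $F_C(a)$ is non-zero, then $b$ is divisible by $y(P)$. *)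

theory Defs
  imports Main
begin

text \<open>
Combinatorial model of a connected unoriented resolution configuration with k \<ge> 1 arcs
in S^2 (oriented).  Shrinking every arc to a point turns the union of the starting circles
and the arcs into a connected 4-valent graph embedded in S^2, one vertex per arc.  We encode
it as a combinatorial map on a finite set of darts (half-edges) drt:
  iota  -- edge involution (fixed-point free),
  rho   -- counterclockwise rotation of darts around each vertex (all orbits of size 4),
  smo   -- at each vertex, which of the two smoothings is the starting one:
           the starting circles pair dart h with rho h if smo h, with rho^-1 h otherwise
           (so smo alternates around a vertex); the ending circles use the other pairing.
Planarity (the map lives on S^2) is Euler's formula: #faces = #vertices + 2,
where #vertices = card drt div 4 is the dimension k of the configuration.
\<close>

record cfg =
  drt  :: "nat set"
  iota :: "nat \<Rightarrow> nat"
  rho  :: "nat \<Rightarrow> nat"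
  smo  :: "nat \<Rightarrow> bool"

definition rel_of :: "(nat \<Rightarrow> nat) \<Rightarrow> nat set \<Rightarrow> (nat \<times> nat) set" where
  "rel_of f D = {(h, f h) | h. h \<in> D}"

definition comp_of :: "(nat \<times> nat) set \<Rightarrow> nat \<Rightarrow> nat set" where
  "comp_of R h = {h'. (h, h') \<in> R\<^sup>*}"

definition comps :: "(nat \<times> nat) set \<Rightarrow> nat set \<Rightarrow> nat set set" where
  "comps R D = comp_of R ` D"

definition start_pair :: "cfg \<Rightarrow> nat \<Rightarrow> nat" where
  "start_pair C h = (if smo C h then rho C h else (rho C ^^ 3) h)"

definition end_pair :: "cfg \<Rightarrow> nat \<Rightarrow> nat" where
  "end_pair C h = (if smo C h then (rho C ^^ 3) h else rho C h)"

definition start_rel :: "cfg \<Rightarrow> (nat \<times> nat) set" where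
  "start_rel C = rel_of (iota C) (drt C) \<union> rel_of (start_pair C) (drt C)"

definition end_rel :: "cfg \<Rightarrow> (nat \<times> nat) set" where
  "end_rel C = rel_of (iota C) (drt C) \<union> rel_of (end_pair C) (drt C)"

definition start_circles :: "cfg \<Rightarrow> nat set set" where
  "start_circles C = comps (start_rel C) (drt C)"

definition end_circles :: "cfg \<Rightarrow> nat set set" where
  "end_circles C = comps (end_rel C) (drt C)"

definition start_circle_of :: "cfg \<Rightarrow> nat \<Rightarrow> nat set" where
  "start_circle_of C h = comp_of (start_rel C) h"

definition end_circle_of :: "cfg \<Rightarrow> nat \<Rightarrow> nat set" where
  "end_circle_of C h = comp_of (end_rel C) h"

definition faces :: "cfg \<Rightarrow> nat set set" where
  "faces C = comps (rel_of (rho C \<circ> iota C) (drt C)) (drt C)"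

definition dim :: "cfg \<Rightarrow> nat" where
  "dim C = card (drt C) div 4"

definition wf_config :: "cfg \<Rightarrow> bool" where
  "wf_config C \<longleftrightarrow>
     finite (drt C) \<and> drt C \<noteq> {} \<and>
     (\<forall>h\<in>drt C. iota C h \<in> drt C \<and> iota C h \<noteq> h \<and> iota C (iota C h) = h) \<and>
     (\<forall>h\<in>drt C. rho C h \<in> drt C) \<and> inj_on (rho C) (drt C) \<and>
     (\<forall>h\<in>drt C. (rho C ^^ 4) h = h \<and> (rho C ^^ 2) h \<noteq> h \<and> rho C h \<noteq> h) \<and>
     (\<forall>h\<in>drt C. smo C (rho C h) = (\<not> smo C h)) \<and>
     (\<forall>h\<in>drt C. \<forall>h'\<in>drt C.
        (h, h') \<in> (rel_of (iota C) (drt C) \<union> rel_of (rho C) (drt C))\<^sup>*) \<and>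
     card (faces C) = dim C + 2"

text \<open>Mirror of the dual configuration: dualising swaps the two smoothings, mirroring
reverses the rotation; together the starting circles of m(C^*) are literally the ending
circles of C and vice versa.\<close>
definition mirror_dual :: "cfg \<Rightarrow> cfg" where
  "mirror_dual C = C\<lparr>rho := rho C ^^ 3\<rparr>"

text \<open>Isomorphism = induced by an orientation-preserving diffeomorphism of S^2.\<close>
definition cfg_iso :: "(nat \<Rightarrow> nat) \<Rightarrow> cfg \<Rightarrow> cfg \<Rightarrow> bool" where
  "cfg_iso f C C' \<longleftrightarrow> bij_betw f (drt C) (drt C') \<and>
     (\<forall>h\<in>drt C. f (iota C h) = iota C' (f h) \<and> f (rho C h) = rho C' (f h)
                \<and> smo C' (f h) = smo C h)"

text \<open>An assignment: F C a b is the coefficient (in F_2) of the monomial b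
(a set of ending circles) in F_C(a), a a monomial (set of starting circles).\<close>
type_synonym assignment = "cfg \<Rightarrow> nat set set \<Rightarrow> nat set set \<Rightarrow> bool"

definition naturality :: "assignment \<Rightarrow> bool" where
  "naturality F \<longleftrightarrow> (\<forall>C C' f. wf_config C \<longrightarrow> wf_config C' \<longrightarrow> cfg_iso f C C' \<longrightarrow>
     (\<forall>a b. a \<subseteq> start_circles C \<longrightarrow> b \<subseteq> end_circles C \<longrightarrow>
        F C' ((`) f ` a) ((`) f ` b) = F C a b))"

definition duality :: "assignment \<Rightarrow> bool" where
  "duality F \<longleftrightarrow> (\<forall>C. wf_config C \<longrightarrow>
     (\<forall>a b. a \<subseteq> start_circles C \<longrightarrow> b \<subseteq> end_circles C \<longrightarrow>
        F C a b = F (mirror_dual C) (end_circles C - b) (start_circles C - a)))"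

definition filtration :: "assignment \<Rightarrow> bool" where
  "filtration F \<longleftrightarrow> (\<forall>C. wf_config C \<longrightarrow>
     (\<forall>a b h. a \<subseteq> start_circles C \<longrightarrow> b \<subseteq> end_circles C \<longrightarrow> h \<in> drt C \<longrightarrow>
        start_circle_of C h \<in> a \<longrightarrow> F C a b \<longrightarrow> end_circle_of C h \<in> b))"

definition has_qdeg :: "assignment \<Rightarrow> cfg \<Rightarrow> int \<Rightarrow> bool" where
  "has_qdeg F C p \<longleftrightarrow> (\<forall>a b. a \<subseteq> start_circles C \<longrightarrow> b \<subseteq> end_circles C \<longrightarrow> F C a b \<longrightarrow>
     int (card (end_circles C)) - 2 * int (card b) + int (dim C)
       = int (card (start_circles C)) - 2 * int (card a) + p)"

definition map_nonzero :: "assignment \<Rightarrow> cfg \<Rightarrow> bool" where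
  "map_nonzero F C \<longleftrightarrow> (\<exists>a b. a \<subseteq> start_circles C \<and> b \<subseteq> end_circles C \<and> F C a b)"

definition is_tree :: "cfg \<Rightarrow> bool" where
  "is_tree C \<longleftrightarrow> card (start_circles C) = dim C + 1 \<and> card (end_circles C) = 1"

definition is_dual_tree :: "cfg \<Rightarrow> bool" where
  "is_dual_tree C \<longleftrightarrow> card (start_circles C) = 1 \<and> card (end_circles C) = dim C + 1"

end

theory Submission
  imports Defs
begin

(* The quantum grading of a term b of F_C(a) of bidegree (k, 2k) gives
   |E| - |S| = k + 2|b| - 2|a|, and the filtration rule makes b non-empty when a is, and b = E
   when a = S.  Since the cobordism from the starting to the ending circles of a connected
   configuration is a connected surface of Euler characteristic -k, |S| + |E| <= k + 2, and
   then only two terms survive: a = S, b = E with |S| = k + 1, |E| = 1, and a = b = 1 with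
   |S| = 1, |E| = k + 1.
   For k = 2 the bound |S| + |E| <= 4 is checked directly on the 4-valent graph with two
   vertices obtained by shrinking the arcs: if some vertex carries no starting circle that is
   a loop, then |S| <= 2; if both do, then |S| <= 3 and all ending circles are joined, |E| = 1. *)

lemma sym_rel_of_involution:
  assumes "\<And>h. h \<in> D \<Longrightarrow> f h \<in> D \<and> f (f h) = h"
  shows "sym (rel_of f D)"
  using assms unfolding rel_of_def sym_def by force

lemma card_comps_le:
  assumes "sym R" and "finite Rs" and "\<And>y. y \<in> D \<Longrightarrow> \<exists>r\<in>Rs. (r, y) \<in> R\<^sup>*"
  shows "card (comps R D) \<le> card Rs"
proof -
  have "comps R D \<subseteq> comp_of R ` Rs"
  proof
    fix c assume "c \<in> comps R D"
    then obtain y r where c: "c = comp_of R y" and r: "r \<in> Rs" "(r, y) \<in> R\<^sup>*"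
      using assms(3) unfolding comps_def by blast
    have "(y, r) \<in> R\<^sup>*"
      using r(2) sym_rtrancl[OF assms(1)] unfolding sym_def by blast
    then have "comp_of R y = comp_of R r"
      using r(2) unfolding comp_of_def by (blast intro: rtrancl_trans)
    then show "c \<in> comp_of R ` Rs" using c r(1) by blast
  qed
  then have "card (comps R D) \<le> card (comp_of R ` Rs)"
    using assms(2) by (intro card_mono) auto
  also have "\<dots> \<le> card Rs" using assms(2) by (rule card_image_le)
  finally show ?thesis .
qed

(* \<iota> is the edge involution on the darts of the 4-valent graph, and \<sigma>, \<tau> pair the darts
   at each vertex as the starting, resp. ending, circles pass through it. *)
locale resolution_map =
  fixes D :: "nat set" and \<iota> \<sigma> \<tau> :: "nat \<Rightarrow> nat"
  assumes \<iota>_in: "d \<in> D \<Longrightarrow> \<iota> d \<in> D" and \<iota>_\<iota>: "d \<in> D \<Longrightarrow> \<iota> (\<iota> d) = d"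
    and \<iota>_neq: "d \<in> D \<Longrightarrow> \<iota> d \<noteq> d"
    and \<sigma>_in: "d \<in> D \<Longrightarrow> \<sigma> d \<in> D" and \<sigma>_\<sigma>: "d \<in> D \<Longrightarrow> \<sigma> (\<sigma> d) = d"
    and \<sigma>_neq: "d \<in> D \<Longrightarrow> \<sigma> d \<noteq> d"
    and \<tau>_in: "d \<in> D \<Longrightarrow> \<tau> d \<in> D" and \<tau>_\<tau>: "d \<in> D \<Longrightarrow> \<tau> (\<tau> d) = d"
    and \<tau>_neq: "d \<in> D \<Longrightarrow> \<tau> d \<noteq> d"
    and \<sigma>_\<tau>_commute: "d \<in> D \<Longrightarrow> \<sigma> (\<tau> d) = \<tau> (\<sigma> d)"
    and \<sigma>_neq_\<tau>: "d \<in> D \<Longrightarrow> \<sigma> d \<noteq> \<tau> d"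
    and connected: "x \<in> D \<Longrightarrow> y \<in> D \<Longrightarrow>
      (x, y) \<in> (rel_of \<iota> D \<union> rel_of \<sigma> D \<union> rel_of \<tau> D)\<^sup>*"
begin

abbreviation circle_rel :: "(nat \<times> nat) set" where
  "circle_rel \<equiv> rel_of \<iota> D \<union> rel_of \<sigma> D"

abbreviation linked :: "nat \<Rightarrow> nat \<Rightarrow> bool" where
  "linked x y \<equiv> (x, y) \<in> circle_rel\<^sup>*"

definition vertex :: "nat \<Rightarrow> nat set" where
  "vertex d = {d, \<sigma> d, \<tau> d, \<sigma> (\<tau> d)}"

lemma sym_circle_rel: "sym circle_rel"
  using \<iota>_in \<iota>_\<iota> \<sigma>_in \<sigma>_\<sigma> by (intro sym_Un sym_rel_of_involution) auto

lemma linked_sym: "linked x y \<Longrightarrow> linked y x"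
  using sym_rtrancl[OF sym_circle_rel] unfolding sym_def by blast

lemma linked_\<iota>: "d \<in> D \<Longrightarrow> linked d (\<iota> d)"
  unfolding rel_of_def by blast

lemma linked_\<sigma>: "d \<in> D \<Longrightarrow> linked d (\<sigma> d)"
  unfolding rel_of_def by blast

lemma in_vertex: "d \<in> vertex d"
  unfolding vertex_def by simp

lemma finite_vertex: "finite (vertex d)"
  unfolding vertex_def by simp

lemma vertex_subset: "d \<in> D \<Longrightarrow> vertex d \<subseteq> D"
  unfolding vertex_def using \<sigma>_in \<tau>_in by auto

lemma card_vertex:
  assumes "d \<in> D" shows "card (vertex d) = 4"
proof -
  have "\<sigma> (\<tau> d) \<noteq> d" "\<sigma> (\<tau> d) \<noteq> \<sigma> d"
    using assms \<sigma>_\<sigma> \<tau>_in \<sigma>_neq_\<tau> \<tau>_neq by metis+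
  then have "distinct [d, \<sigma> d, \<tau> d, \<sigma> (\<tau> d)]"
    using \<sigma>_neq[OF assms] \<tau>_neq[OF assms] \<sigma>_neq_\<tau>[OF assms] \<sigma>_neq[OF \<tau>_in[OF assms]]
    by auto
  then show ?thesis unfolding vertex_def using distinct_card by fastforce
qed

lemma vertex_eq: "d \<in> D \<Longrightarrow> x \<in> vertex d \<Longrightarrow> vertex x = vertex d"
  unfolding vertex_def using \<sigma>_in \<tau>_in \<sigma>_\<sigma> \<tau>_\<tau> \<sigma>_\<tau>_commute by auto

lemma vertex_closed: "d \<in> D \<Longrightarrow> x \<in> vertex d \<Longrightarrow> \<sigma> x \<in> vertex d \<and> \<tau> x \<in> vertex d"
  using vertex_eq[of d x] unfolding vertex_def by auto

lemma vertex_disjoint: "d \<in> D \<Longrightarrow> d' \<in> D \<Longrightarrow> d' \<notin> vertex d \<Longrightarrow> vertex d \<inter> vertex d' = {}"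
  using vertex_eq in_vertex by blast

lemma linked_in_vertex: "d \<in> D \<Longrightarrow> z \<in> vertex d \<Longrightarrow> linked d z \<or> linked (\<tau> d) z"
  unfolding vertex_def using linked_\<sigma> \<tau>_in by auto

lemma exists_\<iota>_leaving_vertex:
  assumes d: "d \<in> D" and "vertex d \<noteq> D"
  shows "\<exists>x\<in>vertex d. \<iota> x \<notin> vertex d"
proof (rule ccontr)
  assume "\<not> ?thesis"
  then have closed: "\<And>x. x \<in> vertex d \<Longrightarrow> \<iota> x \<in> vertex d" by blast
  have "y \<in> vertex d" if "y \<in> D" for y
    using connected[OF d that]
  proof (induction rule: rtrancl_induct)
    case base show ?case by (rule in_vertex)
  next
    case (step y z)
    then show ?case
      using closed vertex_closed[OF d] unfolding rel_of_def by auto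
  qed
  then show False using assms vertex_subset by blast
qed

lemma vertex_linked:
  assumes d: "d \<in> D" and x: "x \<in> vertex d" "\<iota> x \<in> vertex d" "\<iota> x \<noteq> \<sigma> x"
    and z: "z \<in> vertex d"
  shows "linked x z"
proof -
  have xD: "x \<in> D" using d x vertex_subset by blast
  have V: "vertex d = {x, \<sigma> x, \<tau> x, \<sigma> (\<tau> x)}"
    using vertex_eq[OF d x(1)] unfolding vertex_def by simp
  have "\<iota> x = \<tau> x \<or> \<iota> x = \<sigma> (\<tau> x)" using x V \<iota>_neq[OF xD] by auto
  moreover have "linked x (\<iota> x)" "linked x (\<sigma> x)" "linked (\<iota> x) (\<sigma> (\<iota> x))"
    using xD \<iota>_in linked_\<iota> linked_\<sigma> by auto
  ultimately have "linked x (\<tau> x)" "linked x (\<sigma> (\<tau> x))"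
    using \<sigma>_\<sigma>[OF \<tau>_in[OF xD]] by (auto dest: rtrancl_trans)
  then show ?thesis
    using z V \<open>linked x (\<sigma> x)\<close> by auto
qed

(* If \<iota> x = \<sigma> x, the starting circle through x touches the arcs in a single endpoint. *)
lemma \<sigma>_loop_isolated:
  assumes d: "d \<in> D" and "vertex d \<noteq> D"
    and x: "x \<in> vertex d" "\<iota> x = \<sigma> x" and y: "y \<in> vertex d" "y \<noteq> x" "y \<noteq> \<sigma> x"
  shows "\<iota> y \<notin> vertex d"
proof
  assume iy: "\<iota> y \<in> vertex d"
  have xD: "x \<in> D" and yD: "y \<in> D" using d x y vertex_subset by auto
  have Vx: "vertex d = {x, \<sigma> x, \<tau> x, \<sigma> (\<tau> x)}"
    using vertex_eq[OF d x(1)] unfolding vertex_def by simp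
  then have "y = \<tau> x \<or> y = \<sigma> (\<tau> x)" using y by blast
  then have V: "vertex d = {x, \<sigma> x, y, \<sigma> y}"
    using Vx \<sigma>_\<sigma>[OF \<tau>_in[OF xD]] by auto
  have "\<iota> y \<noteq> x" "\<iota> y \<noteq> \<sigma> x"
    using x(2) y(2,3) \<iota>_\<iota>[OF xD] \<iota>_\<iota>[OF yD] by metis+
  then have "\<iota> y = \<sigma> y" using iy V \<iota>_neq[OF yD] by auto
  moreover have "\<iota> (\<sigma> x) = x" using x(2) \<iota>_\<iota>[OF xD] by simp
  moreover have "\<iota> (\<sigma> y) = y" using \<open>\<iota> y = \<sigma> y\<close> \<iota>_\<iota>[OF yD] by simp
  ultimately have "\<forall>z\<in>vertex d. \<iota> z \<in> vertex d" using V x(2) by auto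
  then show False using exists_\<iota>_leaving_vertex assms(1,2) by blast
qed

lemma linked_outside_vertex:
  assumes d: "d \<in> D" and "vertex d \<noteq> D" and z: "z \<in> vertex d" "\<iota> z \<noteq> \<sigma> z"
  shows "\<exists>w\<in>D - vertex d. linked w z"
proof (cases "\<iota> z \<in> vertex d")
  case True
  obtain x where x: "x \<in> vertex d" "\<iota> x \<notin> vertex d"
    using exists_\<iota>_leaving_vertex assms(1,2) by blast
  have xD: "x \<in> D" using d x vertex_subset by blast
  have "linked (\<iota> x) x" using linked_\<iota>[OF \<iota>_in[OF xD]] \<iota>_\<iota>[OF xD] by simp
  moreover have "linked x z"
    using vertex_linked[OF d z(1) True z(2) x(1)] by (rule linked_sym)
  ultimately show ?thesis using x(2) \<iota>_in[OF xD] by (blast intro: rtrancl_trans)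
next
  case False
  have zD: "z \<in> D" using d z vertex_subset by blast
  have "linked (\<iota> z) z" using linked_\<iota>[OF \<iota>_in[OF zD]] \<iota>_\<iota>[OF zD] by simp
  then show ?thesis using False \<iota>_in[OF zD] by blast
qed

end

lemma resolution_map_swap: "resolution_map D \<iota> \<sigma> \<tau> \<Longrightarrow> resolution_map D \<iota> \<tau> \<sigma>"
  unfolding resolution_map_def by (auto simp: Un_ac)

locale resolution_map_dim2 = resolution_map +
  assumes card_div_4: "card D div 4 = 2"
begin

lemma finite_D: "finite D"
  using card_div_4 card.infinite by fastforce

lemma D_nonempty: "D \<noteq> {}"
  using card_div_4 by auto

lemma vertex_neq_D: "d \<in> D \<Longrightarrow> vertex d \<noteq> D"
  using card_vertex card_div_4 by force

lemma two_vertices: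
  assumes d: "d \<in> D"
  obtains b where "b \<in> D" "D = vertex d \<union> vertex b" "vertex d \<inter> vertex b = {}"
proof -
  obtain b where b: "b \<in> D" "b \<notin> vertex d"
    using vertex_neq_D[OF d] vertex_subset[OF d] by blast
  have disj: "vertex d \<inter> vertex b = {}" using vertex_disjoint d b by blast
  have "c \<in> vertex d \<union> vertex b" if c: "c \<in> D" for c
  proof (rule ccontr)
    assume "c \<notin> vertex d \<union> vertex b"
    then have "(vertex d \<union> vertex b) \<inter> vertex c = {}"
      using vertex_disjoint c d b(1) by blast
    then have "card (vertex d \<union> vertex b \<union> vertex c) = 12"
      using disj card_vertex d b(1) c by (simp add: card_Un_disjoint finite_vertex)
    moreover have "vertex d \<union> vertex b \<union> vertex c \<subseteq> D"
      using vertex_subset d b(1) c by blast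
    ultimately have "12 \<le> card D" using card_mono[OF finite_D] by metis
    then show False using card_div_4 by linarith
  qed
  then show thesis using that b(1) disj vertex_subset d b(1) by blast
qed

lemma card_circles_le_2:
  assumes a: "a \<in> D" and no_loop: "\<forall>x\<in>vertex a. \<iota> x \<noteq> \<sigma> x"
  shows "card (comps circle_rel D) \<le> 2"
proof -
  obtain b where b: "b \<in> D" "D = vertex a \<union> vertex b" using two_vertices[OF a] by blast
  have "\<exists>r\<in>{b, \<tau> b}. linked r z" if z: "z \<in> D" for z
  proof (cases "z \<in> vertex b")
    case True
    then show ?thesis using linked_in_vertex[OF b(1)] by blast
  next
    case False
    then have "z \<in> vertex a" using z b(2) by blast
    then obtain w where w: "w \<in> D - vertex a" "linked w z"
      using linked_outside_vertex[OF a vertex_neq_D[OF a]] no_loop by blast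
    moreover have "w \<in> vertex b" using w(1) b(2) by blast
    ultimately show ?thesis using linked_in_vertex[OF b(1)] by (blast intro: rtrancl_trans)
  qed
  then have "card (comps circle_rel D) \<le> card {b, \<tau> b}"
    by (intro card_comps_le[OF sym_circle_rel]) auto
  also have "\<dots> \<le> 2" by (simp add: card_insert_if)
  finally show ?thesis .
qed

lemma card_circles_le_3:
  assumes b: "b \<in> D" and y: "y \<in> vertex b" "\<iota> y = \<sigma> y"
  shows "card (comps circle_rel D) \<le> 3"
proof -
  obtain a where a: "a \<in> D" "D = vertex b \<union> vertex a" using two_vertices[OF b] by blast
  have "\<exists>r\<in>{a, \<tau> a, y}. linked r z" if z: "z \<in> D" for z
  proof (cases "z \<in> vertex b")
    case zb: True
    show ?thesis
    proof (cases "z = y \<or> z = \<sigma> y")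
      case True
      then show ?thesis using linked_\<sigma> y(1) vertex_subset[OF b] by blast
    next
      case False
      then have "\<iota> z \<notin> vertex b"
        using \<sigma>_loop_isolated[OF b vertex_neq_D[OF b] y zb] by blast
      then have "\<iota> z \<in> vertex a" using \<iota>_in[OF z] a(2) by blast
      moreover have "linked (\<iota> z) z" using linked_\<iota>[OF \<iota>_in[OF z]] \<iota>_\<iota>[OF z] by simp
      ultimately show ?thesis using linked_in_vertex[OF a(1)] by (blast intro: rtrancl_trans)
    qed
  next
    case False
    then show ?thesis using linked_in_vertex[OF a(1)] z a(2) by blast
  qed
  then have "card (comps circle_rel D) \<le> card {a, \<tau> a, y}"
    by (intro card_comps_le[OF sym_circle_rel]) auto
  also have "\<dots> \<le> 3" by (simp add: card_insert_if)
  finally show ?thesis .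
qed

lemma card_circles_le_1:
  assumes loops: "\<forall>d\<in>D. \<exists>x\<in>vertex d. \<iota> x = \<tau> x"
  shows "card (comps circle_rel D) \<le> 1"
proof -
  have vertex_linked_to: "\<exists>x. \<forall>z\<in>vertex d. linked x z" if d: "d \<in> D" for d
  proof -
    obtain x where x: "x \<in> vertex d" "\<iota> x = \<tau> x" using loops d by blast
    have "x \<in> D" using x(1) vertex_subset[OF d] by blast
    then have "\<iota> x \<in> vertex d" "\<iota> x \<noteq> \<sigma> x"
      using x vertex_closed[OF d] \<sigma>_neq_\<tau>[of x] by auto
    then show ?thesis using vertex_linked[OF d x(1)] by blast
  qed
  obtain a where a: "a \<in> D" using D_nonempty by blast
  obtain b where b: "b \<in> D" "D = vertex a \<union> vertex b" using two_vertices[OF a] by blast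
  obtain x where x: "\<forall>z\<in>vertex a. linked x z" using vertex_linked_to[OF a] by blast
  obtain y where y: "\<forall>z\<in>vertex b. linked y z" using vertex_linked_to[OF b(1)] by blast
  obtain w where w: "w \<in> vertex a" "\<iota> w \<notin> vertex a"
    using exists_\<iota>_leaving_vertex[OF a vertex_neq_D[OF a]] by blast
  have "w \<in> D" using w(1) vertex_subset[OF a] by blast
  then have "linked x (\<iota> w)" using x w(1) linked_\<iota> by (blast intro: rtrancl_trans)
  moreover have "linked (\<iota> w) y"
    using y w(2) b(2) \<iota>_in[OF \<open>w \<in> D\<close>] linked_sym by blast
  ultimately have "linked x y" by (rule rtrancl_trans)
  then have "\<exists>r\<in>{x}. linked r z" if "z \<in> D" for z
    using that x y b(2) by (blast intro: rtrancl_trans)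
  then have "card (comps circle_rel D) \<le> card {x}"
    by (intro card_comps_le[OF sym_circle_rel]) auto
  then show ?thesis by simp
qed

end

lemma resolution_map_dim2_swap:
  "resolution_map_dim2 D \<iota> \<sigma> \<tau> \<Longrightarrow> resolution_map_dim2 D \<iota> \<tau> \<sigma>"
  unfolding resolution_map_dim2_def resolution_map_dim2_axioms_def
  using resolution_map_swap by blast

theorem (in resolution_map_dim2) card_circles_add_le:
  "card (comps (rel_of \<iota> D \<union> rel_of \<sigma> D) D) + card (comps (rel_of \<iota> D \<union> rel_of \<tau> D) D) \<le> 4"
proof -
  interpret swapped: resolution_map_dim2 D \<iota> \<tau> \<sigma>
    by (rule resolution_map_dim2_swap) (rule resolution_map_dim2_axioms)
  have swapped_vertex: "swapped.vertex d = vertex d" if "d \<in> D" for d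
    using \<sigma>_\<tau>_commute[OF that] unfolding vertex_def swapped.vertex_def by auto
  obtain d where d: "d \<in> D" using D_nonempty by blast
  show ?thesis
  proof (cases "\<forall>d\<in>D. \<exists>x\<in>vertex d. \<iota> x = \<sigma> x")
    case True
    then obtain x where "x \<in> vertex d" "\<iota> x = \<sigma> x" using d by blast
    then show ?thesis
      using card_circles_le_3[OF d] swapped.card_circles_le_1 True swapped_vertex by fastforce
  next
    case no_\<sigma>_loops: False
    show ?thesis
    proof (cases "\<forall>d\<in>D. \<exists>x\<in>vertex d. \<iota> x = \<tau> x")
      case True
      then obtain x where "x \<in> vertex d" "\<iota> x = \<tau> x" using d by blast
      then show ?thesis
        using swapped.card_circles_le_3[OF d] card_circles_le_1 True swapped_vertex[OF d]
        by fastforce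
    next
      case False
      then have "card (comps (rel_of \<iota> D \<union> rel_of \<tau> D) D) \<le> 2"
        using swapped.card_circles_le_2 swapped_vertex by auto
      moreover have "card (comps (rel_of \<iota> D \<union> rel_of \<sigma> D) D) \<le> 2"
        using card_circles_le_2 no_\<sigma>_loops by auto
      ultimately show ?thesis by simp
    qed
  qed
qed

lemma wf_config_resolution_map:
  assumes wf: "wf_config C"
  shows "resolution_map (drt C) (iota C) (start_pair C) (end_pair C)"
proof -
  let ?D = "drt C" and ?r = "rho C"
  have r_in: "\<And>h. h \<in> ?D \<Longrightarrow> ?r h \<in> ?D"
    and r4: "\<And>h. h \<in> ?D \<Longrightarrow> ?r (?r (?r (?r h))) = h"
    and r2: "\<And>h. h \<in> ?D \<Longrightarrow> ?r (?r h) \<noteq> h"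
    and r1: "\<And>h. h \<in> ?D \<Longrightarrow> ?r h \<noteq> h"
    and smo_r: "\<And>h. h \<in> ?D \<Longrightarrow> smo C (?r h) = (\<not> smo C h)"
    and inj: "inj_on ?r ?D"
    using wf unfolding wf_config_def by (simp_all add: eval_nat_numeral)
  have r3: "?r (?r (?r h)) \<noteq> h" if "h \<in> ?D" for h
    using r4[OF that] r1[OF that] by metis
  have r13: "?r h \<noteq> ?r (?r (?r h))" if "h \<in> ?D" for h
    using r2[OF that] inj_onD[OF inj] r_in that by metis
  have sp: "start_pair C h = (if smo C h then ?r h else ?r (?r (?r h)))" for h
    unfolding start_pair_def by (simp add: eval_nat_numeral)
  have ep: "end_pair C h = (if smo C h then ?r (?r (?r h)) else ?r h)" for h
    unfolding end_pair_def by (simp add: eval_nat_numeral)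
  have "rel_of ?r ?D \<subseteq> rel_of (start_pair C) ?D \<union> rel_of (end_pair C) ?D"
    unfolding rel_of_def sp ep by auto
  then have "(rel_of (iota C) ?D \<union> rel_of ?r ?D)\<^sup>* \<subseteq>
      (rel_of (iota C) ?D \<union> rel_of (start_pair C) ?D \<union> rel_of (end_pair C) ?D)\<^sup>*"
    by (intro rtrancl_mono) blast
  moreover have "\<forall>x\<in>?D. \<forall>y\<in>?D. (x, y) \<in> (rel_of (iota C) ?D \<union> rel_of ?r ?D)\<^sup>*"
    using wf unfolding wf_config_def by (elim conjE) assumption
  ultimately have conn: "\<forall>x\<in>?D. \<forall>y\<in>?D.
      (x, y) \<in> (rel_of (iota C) ?D \<union> rel_of (start_pair C) ?D \<union> rel_of (end_pair C) ?D)\<^sup>*"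
    by blast
  have "start_pair C h \<in> ?D" "end_pair C h \<in> ?D"
    and "start_pair C (start_pair C h) = h" "end_pair C (end_pair C h) = h"
    and "start_pair C h \<noteq> h" "end_pair C h \<noteq> h"
    and "start_pair C (end_pair C h) = end_pair C (start_pair C h)"
    and "start_pair C h \<noteq> end_pair C h"
    if h: "h \<in> ?D" for h
    using r_in[OF h] r_in[OF r_in[OF h]] r_in[OF r_in[OF r_in[OF h]]]
      r4 r1 r3 r13 r13[THEN not_sym] smo_r h
    by (simp_all add: sp ep)
  with wf conn show ?thesis
    by unfold_locales (simp_all add: wf_config_def)
qed

lemma card_start_end_circles_le:
  assumes "wf_config C" and "dim C = 2"
  shows "card (start_circles C) + card (end_circles C) \<le> dim C + 2"
proof -
  interpret resolution_map_dim2 "drt C" "iota C" "start_pair C" "end_pair C"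
    using wf_config_resolution_map assms unfolding dim_def
    by (simp add: resolution_map_dim2_def resolution_map_dim2_axioms_def)
  show ?thesis
    using card_circles_add_le assms(2)
    unfolding start_circles_def end_circles_def start_rel_def end_rel_def by simp
qed

lemma start_circles_finite_nonempty:
  assumes "wf_config C"
  shows "finite (start_circles C)" "start_circles C \<noteq> {}"
  using assms unfolding wf_config_def start_circles_def comps_def by auto

lemma end_circles_finite_nonempty:
  assumes "wf_config C"
  shows "finite (end_circles C)" "end_circles C \<noteq> {}"
  using assms unfolding wf_config_def end_circles_def comps_def by auto

lemma filtration_nonempty_target:
  assumes "filtration F" "wf_config C" "a \<subseteq> start_circles C" "b \<subseteq> end_circles C" "F C a b"
    and "a \<noteq> {}"
  shows "b \<noteq> {}"
proof -
  obtain h where "h \<in> drt C" "start_circle_of C h \<in> a"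
    using assms(3,6) unfolding start_circles_def comps_def start_circle_of_def by blast
  then have "end_circle_of C h \<in> b" using assms(1-5) unfolding filtration_def by blast
  then show ?thesis by blast
qed

lemma filtration_full_target:
  assumes "filtration F" "wf_config C" "b \<subseteq> end_circles C" "F C (start_circles C) b"
  shows "b = end_circles C"
proof
  show "end_circles C \<subseteq> b"
  proof
    fix y assume "y \<in> end_circles C"
    then obtain h where h: "h \<in> drt C" "y = end_circle_of C h"
      unfolding end_circles_def comps_def end_circle_of_def by blast
    moreover have "start_circle_of C h \<in> start_circles C"
      using h(1) unfolding start_circles_def comps_def start_circle_of_def by blast
    ultimately show "y \<in> b" using assms unfolding filtration_def by blast
  qed
qed (rule assms(3))

lemma top_degree_support:
  assumes wf: "wf_config C" and filt: "filtration F"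
    and qdeg: "has_qdeg F C (2 * int (dim C))"
    and bound: "card (start_circles C) + card (end_circles C) \<le> dim C + 2"
    and a: "a \<subseteq> start_circles C" and b: "b \<subseteq> end_circles C" and F: "F C a b"
  shows "is_tree C \<and> a = start_circles C \<and> b = end_circles C
    \<or> is_dual_tree C \<and> a = {} \<and> b = {}"
proof -
  let ?S = "start_circles C" and ?E = "end_circles C"
  have fin: "finite ?S" "finite ?E" and ne: "?S \<noteq> {}" "?E \<noteq> {}"
    using start_circles_finite_nonempty end_circles_finite_nonempty wf by auto
  then have pos: "card ?S \<ge> 1" "card ?E \<ge> 1"
    by (simp_all add: Suc_le_eq card_gt_0_iff)
  have q: "int (card ?E) - 2 * int (card b) + int (dim C)
      = int (card ?S) - 2 * int (card a) + 2 * int (dim C)"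
    using qdeg a b F unfolding has_qdeg_def by blast
  consider "a = {}" | "a = ?S" | "a \<noteq> {}" "a \<noteq> ?S" by blast
  then show ?thesis
  proof cases
    case 1
    then have "card b = 0" "card ?S = 1" "card ?E = dim C + 1" using q bound pos by auto
    then have "b = {}" using finite_subset[OF b fin(2)] by simp
    then show ?thesis using 1 \<open>card ?S = 1\<close> \<open>card ?E = dim C + 1\<close>
      unfolding is_dual_tree_def by simp
  next
    case 2
    then have "b = ?E" using filtration_full_target filt wf b F by blast
    then have "card ?S = dim C + 1" "card ?E = 1" using q bound pos 2 by auto
    then show ?thesis using 2 \<open>b = ?E\<close> unfolding is_tree_def by simp
  next
    case 3
    then have "card a < card ?S" using a fin(1) by (meson psubsetI psubset_card_mono)
    moreover have "card b \<ge> 1"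
      using filtration_nonempty_target[OF filt wf a b F 3(1)] finite_subset[OF b fin(2)]
      by (simp add: Suc_le_eq card_gt_0_iff)
    ultimately show ?thesis using q bound by linarith
  qed
qed

theorem lemma3p1:
  fixes F :: assignment and C :: cfg
  assumes "wf_config C" and "dim C = 2"
    and "naturality F" and "duality F" and "filtration F"
    and "map_nonzero F C" and "has_qdeg F C 4"
  shows "(is_tree C \<or> is_dual_tree C)
    \<and> (is_tree C \<longrightarrow> (\<forall>a b. a \<subseteq> start_circles C \<longrightarrow> b \<subseteq> end_circles C \<longrightarrow>
          (F C a b \<longleftrightarrow> a = start_circles C \<and> b = end_circles C)))
    \<and> (is_dual_tree C \<longrightarrow>
          (\<forall>b. b \<subseteq> end_circles C \<longrightarrow> (F C {} b \<longleftrightarrow> b = {}))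
          \<and> (\<forall>b. b \<subseteq> end_circles C \<longrightarrow> \<not> F C (start_circles C) b))"
proof -
  have "has_qdeg F C (2 * int (dim C))" using assms(2,7) by simp
  note support = top_degree_support[OF assms(1,5) this card_start_end_circles_le[OF assms(1,2)]]
  obtain a0 b0 where nonzero: "a0 \<subseteq> start_circles C" "b0 \<subseteq> end_circles C" "F C a0 b0"
    using assms(6) unfolding map_nonzero_def by blast
  have not_both: "\<not> (is_tree C \<and> is_dual_tree C)"
    using assms(2) unfolding is_tree_def is_dual_tree_def by simp
  have tree: "F C a b \<longleftrightarrow> a = start_circles C \<and> b = end_circles C"
    if "is_tree C" "a \<subseteq> start_circles C" "b \<subseteq> end_circles C" for a b
    using that nonzero(3) support[OF nonzero] support[OF that(2,3)] not_both by blast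
  have dual_tree: "F C a b \<longleftrightarrow> a = {} \<and> b = {}"
    if "is_dual_tree C" "a \<subseteq> start_circles C" "b \<subseteq> end_circles C" for a b
    using that nonzero(3) support[OF nonzero] support[OF that(2,3)] not_both by blast
  have "start_circles C \<noteq> {}" using start_circles_finite_nonempty assms(1) by blast
  then show ?thesis using support[OF nonzero] tree dual_tree by blast
qed

end
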